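(* Let $V$ be a nonempty finite subset of $\mathbb{R}^n$ and $W$ a nonempty finite subset of $\mathbb{R}^n\setminus\{0\}$. Let $L=\operatorname{conv}(V)+\operatorname{cone}(W)$ and $f\in\operatorname{int}(L)$. For $t\in\mathbb{N}$ let $L_t=\operatorname{conv}(V\cup(f+tW))$. Then $f\in\operatorname{int}(L_t)$ for every $t\in\mathbb{N}$, the sequence $(L_t)_{t=1}^\infty$ is increasing with respect to inclusion, and $d_f(L_t,L)\to0$ as $t\to\infty$.
   Context: For $X\subseteq\mathbb{R}^n$, the polar is $X^\circ=\{r\in\mathbb{R}^n:r\cdot x\le1\ \forall x\in X\}$. For closed convex sets $B_1,B_2\subseteq\mathbb{R}^n$ containing $f$ in their interiors, $d_f(B_1,B_2)=d_H((B_1-f)^\circ,(B_2-f)^\circ)$, where $d_H$ is the Hausdorff metric on nonempty compact sets. *)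

theory Defs
  imports "HOL-Analysis.Analysis"
begin

definition polar :: "'a::euclidean_space set \<Rightarrow> 'a set" where
  "polar X = {r. \<forall>x\<in>X. r \<bullet> x \<le> 1}"

text \<open>Hausdorff distance (intended for nonempty compact sets).\<close>
definition hausdorff_dist :: "'a::metric_space set \<Rightarrow> 'a set \<Rightarrow> real" where
  "hausdorff_dist A B = max (SUP x\<in>A. infdist x B) (SUP y\<in>B. infdist y A)"

definition polar_dist :: "'a::euclidean_space \<Rightarrow> 'a set \<Rightarrow> 'a set \<Rightarrow> real" where
  "polar_dist f B1 B2 =
     hausdorff_dist (polar ((\<lambda>x. x - f) ` B1)) (polar ((\<lambda>x. x - f) ` B2))"

definition conic_comb :: "'a::real_vector set \<Rightarrow> 'a set" where
  "conic_comb W = {x. \<exists>c. (\<forall>w\<in>W. 0 \<le> c w) \<and> x = (\<Sum>w\<in>W. c w *\<^sub>R w)}"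

end

theory Submission
  imports Defs
begin

text \<open>
  Write \<open>f = v\<^sub>0 + \<Sum> c\<^sub>0(w) w\<close>. For \<open>z = v + \<Sum> c(w) w \<in> L\<close> and \<open>0 \<le> l\<close> with
  \<open>l \<Sum> c(w) \<le> (1 - l) t\<close>, the point \<open>f + l (z - f)\<close> is a convex combination of \<open>v\<close>,
  \<open>v\<^sub>0\<close> and the points \<open>f + t w\<close>, hence lies in \<open>L\<^sub>t\<close>. Shrinking the vertices of a small
  cube around \<open>f\<close> this way shows \<open>f \<in> int L\<^sub>t\<close>; letting \<open>l \<rightarrow> 1\<close> shows that the polars
  of \<open>L\<^sub>t - f\<close>, which are compact because \<open>f\<close> is interior, decrease to the polar of
  \<open>L - f\<close>. A decreasing sequence of compact sets converges to its intersection in the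
  Hausdorff metric.
\<close>

lemma convex_scaleR_add_sum_mem:
  fixes K :: "'a::real_vector set"
  assumes "convex K" "finite I" "q \<in> K" "\<And>i. i \<in> I \<Longrightarrow> p i \<in> K"
    and "\<And>i. i \<in> I \<Longrightarrow> 0 \<le> a i" "0 \<le> b" "b + sum a I = 1"
  shows "b *\<^sub>R q + (\<Sum>i\<in>I. a i *\<^sub>R p i) \<in> K"
proof (cases "sum a I = 0")
  case True
  then have "\<forall>i\<in>I. a i = 0" using assms(2,5) sum_nonneg_eq_0_iff by blast
  then show ?thesis using True assms(3,7) by simp
next
  case False
  define A where "A = sum a I"
  have A: "0 < A" using False assms(2,5) sum_nonneg[of I a] by (auto simp: A_def)
  have "(\<Sum>i\<in>I. (a i / A) *\<^sub>R p i) \<in> K"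
    using A assms(1,2,4,5) by (intro convex_sum) (auto simp: A_def sum_divide_distrib[symmetric])
  then have "b *\<^sub>R q + A *\<^sub>R (\<Sum>i\<in>I. (a i / A) *\<^sub>R p i) \<in> K"
    using assms(1,3,6,7) A by (intro convexD) (auto simp: A_def)
  then show ?thesis using A by (simp add: scaleR_sum_right)
qed

lemma interior_imp_interior_convex_hull_finite:
  fixes S :: "'a::euclidean_space set"
  assumes "x \<in> interior S"
  obtains T where "finite T" "T \<subseteq> S" "x \<in> interior (convex hull T)"
proof -
  obtain r where r: "0 < r" "ball x r \<subseteq> S" using assms mem_interior by blast
  define d where "d = r / (real DIM('a) + 1)"
  have d: "0 < d" "real DIM('a) * d < r" using r by (auto simp: d_def field_simps)
  define u :: 'a where "u = (\<Sum>i\<in>Basis. d *\<^sub>R i)"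
  have u: "u \<bullet> b = d" if "b \<in> Basis" for b
    using that by (simp add: u_def inner_sum_left inner_Basis if_distrib[of "\<lambda>x. d * x"] cong: if_cong)
  obtain T where T: "finite T" "cbox (x - u) (x + u) = convex hull T"
    using cube_convex_hull[OF d(1)] unfolding u_def by blast
  have "cbox (x - u) (x + u) \<subseteq> ball x r"
  proof
    fix y assume "y \<in> cbox (x - u) (x + u)"
    then have "\<bar>(y - x) \<bullet> b\<bar> \<le> d" if "b \<in> Basis" for b
      using that u by (auto simp: mem_box inner_diff_left inner_add_left abs_le_iff)
    then have "(\<Sum>b\<in>Basis. \<bar>(y - x) \<bullet> b\<bar>) \<le> (\<Sum>b\<in>(Basis::'a set). d)"
      by (intro sum_mono)
    then have "norm (y - x) \<le> real DIM('a) * d"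
      using norm_le_l1[of "y - x"] by simp
    then show "y \<in> ball x r" using d by (simp add: dist_norm norm_minus_commute)
  qed
  moreover have "x \<in> interior (cbox (x - u) (x + u))"
    using d u by (simp add: interior_cbox mem_box inner_diff_left inner_add_left)
  ultimately show thesis
    using that T r hull_subset[of T convex] by auto
qed

lemma interior_homothety_centre:
  fixes C :: "'a::real_normed_vector set"
  assumes "f \<in> interior C" "0 < l"
  shows "f \<in> interior ((\<lambda>x. f + l *\<^sub>R (x - f)) ` C)"
proof -
  obtain e where e: "0 < e" "ball f e \<subseteq> C" using assms(1) mem_interior by blast
  have "ball f (l * e) \<subseteq> (\<lambda>x. f + l *\<^sub>R (x - f)) ` C"
  proof
    fix y assume y: "y \<in> ball f (l * e)"
    define s where "s = f + (1 / l) *\<^sub>R (y - f)"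
    have "dist f s = dist f y / l" using assms(2) by (simp add: s_def dist_norm norm_minus_commute)
    then have "s \<in> C" using y e assms(2) by (auto simp: divide_less_eq mult.commute)
    moreover have "y = f + l *\<^sub>R (s - f)" using assms(2) by (simp add: s_def)
    ultimately show "y \<in> (\<lambda>x. f + l *\<^sub>R (x - f)) ` C" by blast
  qed
  then show ?thesis using assms(2) e(1) mem_interior by (metis mult_pos_pos)
qed

lemma closed_polar: "closed (polar X)"
proof -
  have "polar X = (\<Inter>x\<in>X. {r. x \<bullet> r \<le> 1})"
    by (auto simp: polar_def inner_commute)
  then show ?thesis by (simp add: closed_INT closed_halfspace_le)
qed

lemma zero_in_polar: "0 \<in> polar X"
  by (simp add: polar_def)

lemma polar_antimono: "X \<subseteq> Y \<Longrightarrow> polar Y \<subseteq> polar X"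
  by (auto simp: polar_def)

lemma polar_UN: "polar (\<Union>i\<in>I. X i) = (\<Inter>i\<in>I. polar (X i))"
  by (auto simp: polar_def)

lemma polar_subset_cball:
  fixes X :: "'a::euclidean_space set"
  assumes "0 < e" "ball 0 e \<subseteq> X"
  shows "polar X \<subseteq> cball 0 (2 / e)"
proof
  fix r assume r: "r \<in> polar X"
  show "r \<in> cball 0 (2 / e)"
  proof (cases "r = 0")
    case False
    define x where "x = (e / 2 / norm r) *\<^sub>R r"
    have "norm x = e / 2" using False assms(1) by (simp add: x_def)
    then have "x \<in> ball 0 e" using assms(1) by simp
    then have "r \<bullet> x \<le> 1" using r assms(2) by (auto simp: polar_def)
    moreover have "r \<bullet> x = e / 2 * norm r"
      using False by (simp add: x_def power2_norm_eq_inner[symmetric] power2_eq_square)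
    ultimately show ?thesis using assms(1) by (simp add: field_simps)
  qed (use assms in simp)
qed

lemma bounded_polar_interior:
  fixes X :: "'a::euclidean_space set"
  assumes "f \<in> interior X"
  shows "bounded (polar ((\<lambda>x. x - f) ` X))"
proof -
  obtain e where e: "0 < e" "ball f e \<subseteq> X" using assms mem_interior by blast
  have "ball 0 e \<subseteq> (\<lambda>x. x - f) ` X"
  proof
    fix y :: 'a assume "y \<in> ball 0 e"
    then have "y + f \<in> X" using e(2) by (auto simp: dist_norm)
    then show "y \<in> (\<lambda>x. x - f) ` X" by (rule rev_image_eqI) simp
  qed
  then show ?thesis using e(1) by (meson bounded_cball bounded_subset polar_subset_cball)
qed

lemma polar_subset_polar_of_scaled:
  assumes "\<And>y l. y \<in> Y \<Longrightarrow> 0 < l \<Longrightarrow> l < 1 \<Longrightarrow> l *\<^sub>R y \<in> X"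
  shows "polar X \<subseteq> polar Y"
proof (clarsimp simp: polar_def)
  fix r y assume r: "\<forall>x\<in>X. r \<bullet> x \<le> 1" and y: "y \<in> Y"
  show "r \<bullet> y \<le> 1"
  proof (rule field_le_mult_one_interval)
    fix l :: real assume "0 < l" "l < 1"
    then show "l * (r \<bullet> y) \<le> 1" using r assms[OF y] by fastforce
  qed
qed

definition conv_plus_cone :: "'a::real_vector set \<Rightarrow> 'a set \<Rightarrow> 'a set" where
  "conv_plus_cone V W = {v + w | v w. v \<in> convex hull V \<and> w \<in> conic_comb W}"

definition inner_polytope :: "'a::real_vector set \<Rightarrow> 'a set \<Rightarrow> 'a \<Rightarrow> real \<Rightarrow> 'a set" where
  "inner_polytope V W f t = convex hull (V \<union> (\<lambda>w. f + t *\<^sub>R w) ` W)"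

lemma mem_conv_plus_cone:
  "z \<in> conv_plus_cone V W \<longleftrightarrow>
     (\<exists>v c. v \<in> convex hull V \<and> (\<forall>w\<in>W. 0 \<le> c w) \<and> z = v + (\<Sum>w\<in>W. c w *\<^sub>R w))"
  by (auto simp: conv_plus_cone_def conic_comb_def)

lemma convex_conic_comb: "convex (conic_comb W)"
proof (rule convexI)
  fix x y :: 'a and u v :: real
  assume "x \<in> conic_comb W" "y \<in> conic_comb W" and uv: "0 \<le> u" "0 \<le> v"
  then obtain c d where c: "\<forall>w\<in>W. 0 \<le> c w" "x = (\<Sum>w\<in>W. c w *\<^sub>R w)"
    and d: "\<forall>w\<in>W. 0 \<le> d w" "y = (\<Sum>w\<in>W. d w *\<^sub>R w)"
    by (auto simp: conic_comb_def)
  have "u *\<^sub>R x + v *\<^sub>R y = (\<Sum>w\<in>W. (u * c w + v * d w) *\<^sub>R w)"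
    by (simp add: c(2) d(2) scaleR_add_left sum.distrib scaleR_sum_right)
  moreover have "\<forall>w\<in>W. 0 \<le> u * c w + v * d w" using c(1) d(1) uv by simp
  ultimately show "u *\<^sub>R x + v *\<^sub>R y \<in> conic_comb W" by (auto simp: conic_comb_def)
qed

lemma convex_conv_plus_cone: "convex (conv_plus_cone V W)"
proof -
  have "conv_plus_cone V W = convex hull V + conic_comb W"
    by (auto simp: conv_plus_cone_def set_plus_def)
  then show ?thesis by (simp add: convex_set_plus convex_conic_comb)
qed

lemma convex_inner_polytope: "convex (inner_polytope V W f t)"
  by (simp add: inner_polytope_def)

lemma inner_polytope_subset:
  assumes "finite W" "f \<in> conv_plus_cone V W" "0 \<le> t"
  shows "inner_polytope V W f t \<subseteq> conv_plus_cone V W"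
  unfolding inner_polytope_def
proof (intro hull_minimal Un_least subsetI convex_conv_plus_cone)
  fix v assume "v \<in> V"
  then show "v \<in> conv_plus_cone V W"
    unfolding mem_conv_plus_cone by (intro exI[of _ v] exI[of _ "\<lambda>_. 0"]) (simp add: hull_inc)
next
  fix x assume "x \<in> (\<lambda>w. f + t *\<^sub>R w) ` W"
  then obtain w where w: "w \<in> W" "x = f + t *\<^sub>R w" by blast
  obtain v0 c0 where v0: "v0 \<in> convex hull V" "\<forall>u\<in>W. 0 \<le> c0 u" "f = v0 + (\<Sum>u\<in>W. c0 u *\<^sub>R u)"
    using assms(2) mem_conv_plus_cone by blast
  define c where "c u = c0 u + (if u = w then t else 0)" for u
  have "(\<Sum>u\<in>W. c u *\<^sub>R u) = (\<Sum>u\<in>W. c0 u *\<^sub>R u) + t *\<^sub>R w"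
    using assms(1) w(1) by (simp add: c_def scaleR_add_left sum.distrib if_distrib[of "\<lambda>r. r *\<^sub>R _"] cong: if_cong)
  then have "x = v0 + (\<Sum>u\<in>W. c u *\<^sub>R u)" using v0(3) w(2) by simp
  moreover have "\<forall>u\<in>W. 0 \<le> c u" using v0(2) assms(3) by (simp add: c_def)
  ultimately show "x \<in> conv_plus_cone V W" using v0(1) mem_conv_plus_cone by blast
qed

lemma centre_mem_inner_polytope:
  assumes "finite W" "f \<in> conv_plus_cone V W" "0 < t"
  shows "f \<in> inner_polytope V W f t"
proof -
  obtain v0 c0 where v0: "v0 \<in> convex hull V" "\<forall>w\<in>W. 0 \<le> c0 w" "f = v0 + (\<Sum>w\<in>W. c0 w *\<^sub>R w)"
    using assms(2) mem_conv_plus_cone by blast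
  define C where "C = sum c0 W"
  have C: "0 \<le> C" using v0(2) by (simp add: C_def sum_nonneg)
  have "(t / (t + C)) *\<^sub>R v0 + (\<Sum>w\<in>W. (c0 w / (t + C)) *\<^sub>R (f + t *\<^sub>R w)) \<in> inner_polytope V W f t"
    unfolding inner_polytope_def using assms(1,3) v0(1,2) C
    by (intro convex_scaleR_add_sum_mem)
       (auto simp: hull_inc hull_mono[OF Un_upper1, THEN subsetD] C_def add_divide_distrib[symmetric] sum_divide_distrib[symmetric])
  moreover
  have "(\<Sum>w\<in>W. (c0 w / (t + C)) *\<^sub>R (f + t *\<^sub>R w))
      = (1 / (t + C)) *\<^sub>R (C *\<^sub>R f + t *\<^sub>R (\<Sum>w\<in>W. c0 w *\<^sub>R w))"
    by (simp add: C_def scaleR_add_right sum.distrib scaleR_sum_right scaleR_sum_left mult.commute)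
  then have "(t / (t + C)) *\<^sub>R v0 + (\<Sum>w\<in>W. (c0 w / (t + C)) *\<^sub>R (f + t *\<^sub>R w))
      = (1 / (t + C)) *\<^sub>R ((t + C) *\<^sub>R f)"
    using v0(3) by (simp add: algebra_simps)
  ultimately show ?thesis using assms(3) C by simp
qed

lemma homothety_mem_inner_polytope:
  assumes "finite W" "f \<in> conv_plus_cone V W" "v \<in> convex hull V" "\<forall>w\<in>W. 0 \<le> c w"
    and "0 \<le> l" "0 < t" "l * sum c W \<le> (1 - l) * t"
  shows "f + l *\<^sub>R (v + (\<Sum>w\<in>W. c w *\<^sub>R w) - f) \<in> inner_polytope V W f t"
proof -
  let ?K = "inner_polytope V W f t"
  define s where "s = l * sum c W / t"
  have "l * sum c W < t \<or> l = 0"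
  proof (cases "l = 0")
    case False
    then have "0 < l * t" using assms(5,6) by simp
    then show ?thesis using assms(7) by (simp add: algebra_simps)
  qed simp
  then have s: "0 \<le> s" "s \<le> 1 - l" "s < 1"
    using assms(4-7) sum_nonneg[of W c] by (auto simp: s_def divide_le_eq divide_less_eq)
  have "v \<in> ?K" using assms(3) unfolding inner_polytope_def by (meson hull_mono hull_hull Un_upper1 subsetD)
  moreover have "f \<in> ?K" using assms(1,2,6) by (rule centre_mem_inner_polytope)
  ultimately have q: "(l / (1 - s)) *\<^sub>R v + ((1 - l - s) / (1 - s)) *\<^sub>R f \<in> ?K"
    using s assms(5) by (intro convexD convex_inner_polytope) (auto simp: add_divide_distrib[symmetric])
  have "(1 - s) *\<^sub>R ((l / (1 - s)) *\<^sub>R v + ((1 - l - s) / (1 - s)) *\<^sub>R f)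
      + (\<Sum>w\<in>W. (l * c w / t) *\<^sub>R (f + t *\<^sub>R w)) \<in> ?K" (is "?q + ?p \<in> ?K")
    using assms(1,4-6) s q unfolding inner_polytope_def
    by (intro convex_scaleR_add_sum_mem)
       (auto simp: hull_inc s_def sum_divide_distrib[symmetric] sum_distrib_left)
  moreover have "?p = s *\<^sub>R f + l *\<^sub>R (\<Sum>w\<in>W. c w *\<^sub>R w)"
    using assms(6) by (simp add: s_def scaleR_add_right sum.distrib scaleR_sum_right
        scaleR_sum_left[symmetric] sum_distrib_left sum_divide_distrib[symmetric])
  moreover have "?q = l *\<^sub>R v + (1 - l - s) *\<^sub>R f"
    using s by (simp add: scaleR_add_right)
  moreover have "f + l *\<^sub>R (v + (\<Sum>w\<in>W. c w *\<^sub>R w) - f)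
      = (l *\<^sub>R v + (1 - l - s) *\<^sub>R f) + (s *\<^sub>R f + l *\<^sub>R (\<Sum>w\<in>W. c w *\<^sub>R w))"
    by (simp add: algebra_simps)
  ultimately show ?thesis by simp
qed

lemma inner_polytope_mono:
  assumes "finite W" "f \<in> conv_plus_cone V W" "0 \<le> s" "s \<le> t"
  shows "inner_polytope V W f s \<subseteq> inner_polytope V W f t"
proof (cases "t = 0")
  case False
  then have t: "0 < t" using assms(3,4) by simp
  let ?K = "inner_polytope V W f t"
  have "f + s *\<^sub>R w \<in> ?K" if "w \<in> W" for w
  proof -
    have "(1 - s / t) *\<^sub>R f + (s / t) *\<^sub>R (f + t *\<^sub>R w) \<in> ?K"
      using that t assms(3,4) centre_mem_inner_polytope[OF assms(1,2) t]
      by (intro convexD convex_inner_polytope) (auto simp: inner_polytope_def hull_inc)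
    then show ?thesis using t by (simp add: algebra_simps)
  qed
  then show ?thesis
    unfolding inner_polytope_def[of V W f s]
    by (intro hull_minimal convex_inner_polytope) (auto simp: inner_polytope_def hull_inc)
qed (use assms in simp)

lemma interior_inner_polytope:
  fixes V W :: "'a::euclidean_space set"
  assumes "finite W" "f \<in> interior (conv_plus_cone V W)" "1 \<le> t"
  shows "f \<in> interior (inner_polytope V W f t)"
proof -
  obtain T where T: "finite T" "T \<subseteq> conv_plus_cone V W" "f \<in> interior (convex hull T)"
    using assms(2) by (rule interior_imp_interior_convex_hull_finite)
  then obtain v c where vc: "\<forall>z\<in>T. v z \<in> convex hull V \<and> (\<forall>w\<in>W. 0 \<le> c z w)
      \<and> z = v z + (\<Sum>w\<in>W. c z w *\<^sub>R w)"
    unfolding mem_conv_plus_cone subset_iff by metis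
  define M where "M = (\<Sum>z\<in>T. sum (c z) W)"
  have c_le_M: "0 \<le> sum (c z) W \<and> sum (c z) W \<le> M" if "z \<in> T" for z
    using that T(1) vc by (auto simp: M_def sum_nonneg intro!: member_le_sum)
  then have "0 \<le> M" using T(1) vc by (simp add: M_def sum_nonneg)
  define l where "l = 1 / (M + 1)"
  have l: "0 < l" "l \<le> 1" "l * M = 1 - l" using \<open>0 \<le> M\<close> by (auto simp: l_def field_simps)
  define h where "h x = f + l *\<^sub>R (x - f)" for x
  have "h ` T \<subseteq> inner_polytope V W f t"
  proof clarify
    fix z assume "z \<in> T"
    have "l * sum (c z) W \<le> l * M" using c_le_M[OF \<open>z \<in> T\<close>] l(1) by (simp add: mult_left_mono)
    also have "\<dots> = (1 - l) * 1" using l(3) by simp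
    also have "\<dots> \<le> (1 - l) * t" using assms(3) l(2) by (intro mult_left_mono) auto
    finally have "h (v z + (\<Sum>w\<in>W. c z w *\<^sub>R w)) \<in> inner_polytope V W f t"
      unfolding h_def using vc \<open>z \<in> T\<close> l(1) assms(3)
      by (intro homothety_mem_inner_polytope[OF assms(1) interior_subset[THEN subsetD, OF assms(2)]]) auto
    then show "h z \<in> inner_polytope V W f t" using vc \<open>z \<in> T\<close> by simp
  qed
  moreover have "h ` (convex hull T) = convex hull (h ` T)"
  proof -
    have "h = (\<lambda>x. (f - l *\<^sub>R f) + l *\<^sub>R x)" by (auto simp: h_def algebra_simps)
    then show ?thesis by (simp add: convex_hull_affinity)
  qed
  ultimately have "h ` (convex hull T) \<subseteq> inner_polytope V W f t"
    by (simp add: hull_minimal convex_inner_polytope)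
  moreover have "f \<in> interior (h ` (convex hull T))"
    unfolding h_def using T(3) l(1) by (rule interior_homothety_centre)
  ultimately show ?thesis using interior_mono by blast
qed

lemma polar_inner_polytopes:
  fixes V W :: "'a::euclidean_space set"
  assumes "finite W" "f \<in> conv_plus_cone V W"
  shows "(\<Inter>n. polar ((\<lambda>x. x - f) ` inner_polytope V W f (Suc n)))
       = polar ((\<lambda>x. x - f) ` conv_plus_cone V W)"
  unfolding polar_UN[symmetric]
proof (rule antisym[OF polar_subset_polar_of_scaled polar_antimono])
  show "(\<Union>n. (\<lambda>x. x - f) ` inner_polytope V W f (Suc n)) \<subseteq> (\<lambda>x. x - f) ` conv_plus_cone V W"
    using inner_polytope_subset[OF assms] by (intro UN_least image_mono) simp
next
  fix y and l :: real
  assume "y \<in> (\<lambda>x. x - f) ` conv_plus_cone V W" and l: "0 < l" "l < 1"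
  then obtain z where "z \<in> conv_plus_cone V W" "y = z - f" by blast
  then obtain v c where vc: "v \<in> convex hull V" "\<forall>w\<in>W. 0 \<le> c w" "y = v + (\<Sum>w\<in>W. c w *\<^sub>R w) - f"
    unfolding mem_conv_plus_cone by auto
  define n where "n = nat \<lceil>l * sum c W / (1 - l)\<rceil>"
  have "l * sum c W / (1 - l) \<le> real (Suc n)" unfolding n_def by linarith
  then have "l * sum c W \<le> (1 - l) * real (Suc n)" using l by (simp add: field_simps)
  then have mem: "f + l *\<^sub>R y \<in> inner_polytope V W f (Suc n)"
    using vc l by (auto intro: homothety_mem_inner_polytope[OF assms])
  show "l *\<^sub>R y \<in> (\<Union>n. (\<lambda>x. x - f) ` inner_polytope V W f (Suc n))"
  proof (rule UN_I)
    show "l *\<^sub>R y \<in> (\<lambda>x. x - f) ` inner_polytope V W f (Suc n)"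
      using mem by (rule rev_image_eqI) simp
  qed simp
qed

lemma hausdorff_dist_decseq_Inter:
  fixes P :: "nat \<Rightarrow> 'a::heine_borel set"
  assumes "\<And>n. compact (P n)" "decseq P" "(\<Inter>n. P n) \<noteq> {}"
  shows "(\<lambda>n. hausdorff_dist (P n) (\<Inter>n. P n)) \<longlonglongrightarrow> 0"
proof (rule LIMSEQ_I)
  define Q where "Q = (\<Inter>n. P n)"
  fix e :: real assume e: "0 < e"
  define F where "F n = {x \<in> P n. e / 2 \<le> infdist x Q}" for n
  \<comment> \<open>The \<open>F n\<close> are nested compact sets with empty intersection, so one of them is empty.\<close>
  have "\<Inter>(range F) = {}"
  proof -
    have "infdist x Q = 0" if "x \<in> Q" for x using that by (rule infdist_zero)
    then show ?thesis using e by (fastforce simp: F_def Q_def)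
  qed
  moreover have "compact (F n)" for n
  proof -
    have "closed {x. e / 2 \<le> infdist x Q}"
      by (intro closed_Collect_le continuous_intros continuous_on_infdist) auto
    then show ?thesis
      using assms(1) unfolding F_def by (simp add: Collect_conj_eq compact_Int_closed)
  qed
  moreover have "F n \<subseteq> F m" if "m \<le> n" for m n
    using assms(2) that by (auto simp: F_def decseq_def)
  ultimately obtain N where "F N = {}"
    using compact_nest[of F] by blast
  then have far: "infdist x Q < e / 2" if "x \<in> P N" for x using that by (auto simp: F_def)
  show "\<exists>N. \<forall>n\<ge>N. norm (hausdorff_dist (P n) Q - 0) < e"
  proof (intro exI allI impI)
    fix n assume "N \<le> n"
    have "P n \<noteq> {}" using assms(3) by auto
    moreover have "infdist x Q \<le> e / 2" if "x \<in> P n" for x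
      using far[of x] that assms(2) \<open>N \<le> n\<close> unfolding decseq_def by (meson less_imp_le subsetD)
    ultimately have "(SUP x\<in>P n. infdist x Q) \<le> e / 2" by (rule cSUP_least)
    moreover have "(SUP y\<in>Q. infdist y (P n)) = 0"
      using assms(3) by (simp add: Q_def infdist_zero)
    ultimately show "norm (hausdorff_dist (P n) Q - 0) < e"
      using e by (simp add: hausdorff_dist_def)
  qed
qed

theorem lemma4p1:
  fixes V W :: "'a::euclidean_space set" and f :: 'a
    and L :: "'a set" and Lt :: "nat \<Rightarrow> 'a set"
  assumes "finite V" "V \<noteq> {}"
    and "finite W" "W \<noteq> {}" "0 \<notin> W"
    and L_def: "L = {v + w | v w. v \<in> convex hull V \<and> w \<in> conic_comb W}"
    and f_int: "f \<in> interior L"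
    and Lt_def: "\<And>t. Lt t = convex hull (V \<union> (\<lambda>w. f + real t *\<^sub>R w) ` W)"
  shows "(\<forall>t\<ge>1. f \<in> interior (Lt t))
       \<and> (\<forall>t\<ge>1. Lt t \<subseteq> Lt (Suc t))
       \<and> ((\<lambda>t. polar_dist f (Lt t) L) \<longlonglongrightarrow> 0)"
proof -
  have L: "L = conv_plus_cone V W" by (simp add: L_def conv_plus_cone_def)
  have Lt: "Lt t = inner_polytope V W f (real t)" for t by (simp add: Lt_def inner_polytope_def)
  have f_L: "f \<in> conv_plus_cone V W" using f_int interior_subset L by blast
  have interior: "f \<in> interior (Lt t)" if "1 \<le> t" for t
    using interior_inner_polytope[OF \<open>finite W\<close>] f_int that L Lt by simp
  have mono: "Lt s \<subseteq> Lt t" if "s \<le> t" for s t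
    using inner_polytope_mono[OF \<open>finite W\<close> f_L] that Lt by simp
  define P where "P n = polar ((\<lambda>x. x - f) ` Lt (Suc n))" for n
  have "decseq P"
    unfolding P_def by (intro decseq_SucI polar_antimono image_mono mono) simp
  moreover have "compact (P n)" for n
  proof -
    have "bounded (P 0)" unfolding P_def using interior by (simp add: bounded_polar_interior)
    then show ?thesis using \<open>decseq P\<close> closed_polar
      by (metis P_def bounded_subset compact_eq_bounded_closed decseq_def le0)
  qed
  moreover have "(\<Inter>n. P n) = polar ((\<lambda>x. x - f) ` L)"
    unfolding P_def Lt L using polar_inner_polytopes[OF \<open>finite W\<close> f_L] by simp
  ultimately have "(\<lambda>n. hausdorff_dist (P n) (polar ((\<lambda>x. x - f) ` L))) \<longlonglongrightarrow> 0"
    using hausdorff_dist_decseq_Inter[of P] zero_in_polar by fastforce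
  then have "(\<lambda>t. polar_dist f (Lt t) L) \<longlonglongrightarrow> 0"
    unfolding P_def polar_dist_def by (rule LIMSEQ_imp_Suc)
  then show ?thesis using interior mono by simp
qed

end
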